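(* There is an absolute constant $C$ such that for every $n\ge 2$ there exists an $n\times n$ matrix $A$ over $GF(2)$ such that the map $\phi(x)=Ax$ is a mapping from ${\sf Dictator}$ to ${\sf XOR}$ on $\{0,1\}^n$, every output bit of $\phi$ depends on at most $3$ input bits, $\phi$ is $2$-Lipschitz, and $\phi^{-1}$ is $C\log n$-Lipschitz.
   Context: ${\sf Dictator}(x)=x_1$ and ${\sf XOR}(x)=\sum_{i=1}^n x_i \bmod 2$ on $\{0,1\}^n$. A mapping from $f$ to $g$ is a bijection $\psi$ of $\{0,1\}^n$ with $f(z)=g(\psi(z))$ for all $z$. A map is $L$-Lipschitz if it increases Hamming distances by a factor at most $L$. An output bit depends on at most $3$ input bits means it is a function of some fixed set of at most $3$ input coordinates. *)

theory Defs
  imports Complex_Main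
begin

text \<open>Points of {0,1}^n are modelled as functions nat => bool that are False
  outside the coordinates 0..n-1 (True = 1). Coordinate x_1 of the paper is index 0.\<close>

definition cube :: "nat \<Rightarrow> (nat \<Rightarrow> bool) set" where
  "cube n = {x. \<forall>i\<ge>n. x i = False}"

definition hamming :: "nat \<Rightarrow> (nat \<Rightarrow> bool) \<Rightarrow> (nat \<Rightarrow> bool) \<Rightarrow> nat" where
  "hamming n x y = card {i. i < n \<and> x i \<noteq> y i}"

definition Dictator :: "(nat \<Rightarrow> bool) \<Rightarrow> bool" where
  "Dictator x = x 0"

definition XOR :: "nat \<Rightarrow> (nat \<Rightarrow> bool) \<Rightarrow> bool" where
  "XOR n x = odd (card {i. i < n \<and> x i})"

definition matvec :: "nat \<Rightarrow> (nat \<Rightarrow> nat \<Rightarrow> bool) \<Rightarrow> (nat \<Rightarrow> bool) \<Rightarrow> (nat \<Rightarrow> bool)" where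
  "matvec n A x = (\<lambda>i. i < n \<and> odd (card {j. j < n \<and> A i j \<and> x j}))"

definition is_mapping :: "nat \<Rightarrow> ((nat \<Rightarrow> bool) \<Rightarrow> bool) \<Rightarrow> ((nat \<Rightarrow> bool) \<Rightarrow> bool)
    \<Rightarrow> ((nat \<Rightarrow> bool) \<Rightarrow> (nat \<Rightarrow> bool)) \<Rightarrow> bool" where
  "is_mapping n f g \<psi> \<longleftrightarrow> bij_betw \<psi> (cube n) (cube n) \<and> (\<forall>z\<in>cube n. f z = g (\<psi> z))"

definition lipschitz_cube :: "nat \<Rightarrow> real \<Rightarrow> ((nat \<Rightarrow> bool) \<Rightarrow> (nat \<Rightarrow> bool)) \<Rightarrow> bool" where
  "lipschitz_cube n L \<psi> \<longleftrightarrow>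
     (\<forall>x\<in>cube n. \<forall>y\<in>cube n. real (hamming n (\<psi> x) (\<psi> y)) \<le> L * real (hamming n x y))"

definition output_depends_on_at_most :: "nat \<Rightarrow> nat \<Rightarrow> ((nat \<Rightarrow> bool) \<Rightarrow> (nat \<Rightarrow> bool)) \<Rightarrow> bool" where
  "output_depends_on_at_most n k \<psi> \<longleftrightarrow>
     (\<forall>i<n. \<exists>S. S \<subseteq> {..<n} \<and> card S \<le> k \<and>
        (\<forall>x\<in>cube n. \<forall>y\<in>cube n. (\<forall>j\<in>S. x j = y j) \<longrightarrow> \<psi> x i = \<psi> y i))"

end

theory Submission imports Defs begin

text \<open>Arrange the coordinates as a binary heap (the children of i are 2i+1 and 2i+2) and let
  output bit i be the parity of input i and its two children. Every input other than the root 0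
  then enters exactly two outputs (its own and its parent's) and the root only one, so the parity
  of the output equals x_0. Flipping one input flips at most two outputs. Conversely, if inputs
  i differ but output i agrees, then one of the children of i differs; descending in the tree one
  reaches a differing output that lies below i. Hence every differing input is an ancestor of a
  differing output, and a node has at most log n ancestors.\<close>

definition heap_matrix :: "nat \<Rightarrow> nat \<Rightarrow> bool" where
  "heap_matrix i j \<longleftrightarrow> j = i \<or> j = 2*i+1 \<or> j = 2*i+2"

abbreviation heap_map :: "nat \<Rightarrow> (nat \<Rightarrow> bool) \<Rightarrow> nat \<Rightarrow> bool" where
  "heap_map n \<equiv> matvec n heap_matrix"

lemma cube_less: "x \<in> cube n \<Longrightarrow> x i \<Longrightarrow> i < n"
  by (auto simp: cube_def not_less[symmetric])

lemma finite_cube: "finite (cube n)"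
proof -
  have "cube n \<subseteq> (\<lambda>S i. i \<in> S) ` Pow {..<n}"
  proof
    fix x assume "x \<in> cube n"
    hence "x = (\<lambda>i. i \<in> {i. i < n \<and> x i})" using cube_less by auto
    thus "x \<in> (\<lambda>S i. i \<in> S) ` Pow {..<n}" by blast
  qed
  thus ?thesis by (rule finite_subset) auto
qed

lemma card_le_mult_card_if_covered:
  assumes "finite E" and "D \<subseteq> (\<Union>j\<in>E. F j)"
    and "\<And>j. j \<in> E \<Longrightarrow> finite (F j)" and "\<And>j. j \<in> E \<Longrightarrow> card (F j) \<le> k"
  shows "card D \<le> k * card E"
proof -
  have "card D \<le> card (\<Union>j\<in>E. F j)"
    using assms(1-3) by (intro card_mono) auto
  also have "\<dots> \<le> (\<Sum>j\<in>E. card (F j))"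
    using assms(1) by (rule card_UN_le)
  also have "\<dots> \<le> card E * k"
    using sum_bounded_above[of E "\<lambda>j. card (F j)" k] assms(4) by simp
  finally show ?thesis by (simp add: mult.commute)
qed

lemma lipschitz_cube_the_inv_into:
  assumes f: "bij_betw f (cube n) (cube n)"
    and le: "\<And>x y. x \<in> cube n \<Longrightarrow> y \<in> cube n \<Longrightarrow>
                real (hamming n x y) \<le> L * real (hamming n (f x) (f y))"
  shows "lipschitz_cube n L (the_inv_into (cube n) f)"
  unfolding lipschitz_cube_def
proof (intro ballI)
  fix y y' assume "y \<in> cube n" "y' \<in> cube n"
  moreover have "the_inv_into (cube n) f z \<in> cube n" "f (the_inv_into (cube n) f z) = z"
    if "z \<in> cube n" for z
    using that bij_betw_apply[OF bij_betw_the_inv_into[OF f]] f_the_inv_into_f_bij_betw[OF f]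
    by auto
  ultimately show "real (hamming n (the_inv_into (cube n) f y) (the_inv_into (cube n) f y'))
      \<le> L * real (hamming n y y')"
    using le by metis
qed

lemma lipschitz_cube_mono:
  assumes "lipschitz_cube n L f" and "L \<le> L'"
  shows "lipschitz_cube n L' f"
  using assms unfolding lipschitz_cube_def by (meson mult_right_mono of_nat_0_le_iff order_trans)

lemma heap_map_eq:
  assumes "x \<in> cube n"
  shows "heap_map n x i \<longleftrightarrow> i < n \<and> (x i \<noteq> (x (2*i+1) \<noteq> x (2*i+2)))"
proof (cases "i < n")
  case True
  have set_eq: "{j. j < n \<and> heap_matrix i j \<and> x j} =
      (if x i then {i} else {}) \<union> (if x (2*i+1) then {2*i+1} else {}) \<union>
      (if x (2*i+2) then {2*i+2} else {})"
    using True cube_less[OF assms] by (auto simp: heap_matrix_def)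
  then show ?thesis
    using True unfolding matvec_def set_eq
    by (cases "x i"; cases "x (2*i+1)"; cases "x (2*i+2)") simp_all
qed (simp add: matvec_def)

lemma heap_map_into_cube: "heap_map n ` cube n \<subseteq> cube n"
  by (auto simp: cube_def matvec_def)

lemma heap_map_depends_on_at_most_3: "output_depends_on_at_most n 3 (heap_map n)"
  unfolding output_depends_on_at_most_def
proof (intro allI impI)
  fix i assume "i < n"
  let ?S = "{i, 2*i+1, 2*i+2} \<inter> {..<n}"
  have "card ?S \<le> card {i, 2*i+1, 2*i+2}" by (rule card_mono) auto
  also have "\<dots> \<le> 3" by (simp add: card_insert_if)
  finally have "card ?S \<le> 3" .
  moreover have "heap_map n x i = heap_map n y i"
    if "x \<in> cube n" "y \<in> cube n" "\<forall>j\<in>?S. x j = y j" for x y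
  proof -
    have "x c = y c" if "c \<in> {i, 2*i+1, 2*i+2}" for c
      using that \<open>\<forall>j\<in>?S. x j = y j\<close> cube_less[OF \<open>x \<in> cube n\<close>, of c]
        cube_less[OF \<open>y \<in> cube n\<close>, of c]
      by (cases "c < n") auto
    then show ?thesis by (simp add: heap_map_eq[OF \<open>x \<in> cube n\<close>] heap_map_eq[OF \<open>y \<in> cube n\<close>])
  qed
  ultimately show "\<exists>S\<subseteq>{..<n}. card S \<le> 3 \<and> (\<forall>x\<in>cube n. \<forall>y\<in>cube n.
      (\<forall>j\<in>S. x j = y j) \<longrightarrow> heap_map n x i = heap_map n y i)"
    by (intro exI[of _ ?S]) blast
qed

lemma sum_lessThan_pairs:
  fixes f :: "nat \<Rightarrow> 'a::comm_monoid_add"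
  shows "(\<Sum>i<n. f (2*i) + f (2*i+1)) = (\<Sum>j<2*n. f j)"
  by (induction n) (simp_all add: algebra_simps)

lemma XOR_heap_map:
  assumes x: "x \<in> cube n"
  shows "XOR n (heap_map n x) = Dictator x"
proof -
  define b where "b j = (of_bool (x j) :: nat)" for j
  define t where "t i = b i + b (2*i+1) + b (2*i+2)" for i
  have "{i. i < n \<and> heap_map n x i} = {i\<in>{..<n}. odd (t i)}"
    by (auto simp: heap_map_eq[OF x] t_def b_def split: if_splits)
  then have "XOR n (heap_map n x) \<longleftrightarrow> odd (\<Sum>i<n. t i)"
    unfolding XOR_def by (simp add: even_sum_iff)
  moreover have "(\<Sum>i<n. t i) + b 0 = 2 * (\<Sum>j<n. b j)"
  proof -
    have "(\<Sum>i<n. b (2*i+1) + b (2*i+2)) + b 0 = (\<Sum>j<Suc (2*n). b j)"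
      using sum_lessThan_pairs[of "\<lambda>j. b (Suc j)" n]
      by (simp add: sum.lessThan_Suc_shift del: sum.lessThan_Suc)
    also have "\<dots> = (\<Sum>j<n. b j)"
      by (intro sum.mono_neutral_right) (auto simp: b_def dest: cube_less[OF x])
    finally show ?thesis by (simp add: t_def sum.distrib)
  qed
  ultimately have "XOR n (heap_map n x) \<longleftrightarrow> odd (b 0)"
    by (metis dvd_triv_left even_add)
  then show ?thesis by (simp add: b_def Dictator_def)
qed

lemma heap_map_diff_output:
  assumes "x \<in> cube n" "y \<in> cube n" "heap_map n x j \<noteq> heap_map n y j"
  obtains c where "c < n" "x c \<noteq> y c" "j \<in> {c, (c - 1) div 2}"
proof -
  obtain c where c: "c = j \<or> c = 2*j+1 \<or> c = 2*j+2" "x c \<noteq> y c"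
    using assms heap_map_eq by (metis (full_types))
  moreover have "c < n"
    using c(2) cube_less assms(1,2) by (metis (full_types))
  ultimately show ?thesis using that[of c] by auto
qed

lemma hamming_heap_map_le:
  assumes "x \<in> cube n" "y \<in> cube n"
  shows "hamming n (heap_map n x) (heap_map n y) \<le> 2 * hamming n x y"
  unfolding hamming_def
proof (rule card_le_mult_card_if_covered)
  show "{j. j < n \<and> heap_map n x j \<noteq> heap_map n y j}
      \<subseteq> (\<Union>c\<in>{c. c < n \<and> x c \<noteq> y c}. {c, (c - 1) div 2})"
    using heap_map_diff_output[OF assms] by blast
qed (auto simp: card_insert_if)

fun heap_ancestors :: "nat \<Rightarrow> nat set" where
  "heap_ancestors 0 = {0}"
| "heap_ancestors (Suc j) = insert (Suc j) (heap_ancestors (j div 2))"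

lemma finite_heap_ancestors: "finite (heap_ancestors j)"
  by (induction j rule: heap_ancestors.induct) auto

lemma self_in_heap_ancestors: "j \<in> heap_ancestors j"
  by (cases j) auto

lemma parent_in_heap_ancestors:
  "c \<in> heap_ancestors j \<Longrightarrow> c = 2*i+1 \<or> c = 2*i+2 \<Longrightarrow> i \<in> heap_ancestors j"
proof (induction j rule: heap_ancestors.induct)
  case (2 j)
  then show ?case
    by (cases "c = Suc j") (auto simp: self_in_heap_ancestors)
qed auto

lemma card_heap_ancestors_le: "j < 2^k - 1 \<Longrightarrow> card (heap_ancestors j) \<le> k"
proof (induction j arbitrary: k rule: heap_ancestors.induct)
  case 1
  then show ?case by (cases k) auto
next
  case (2 j)
  then obtain k' where k: "k = Suc k'" by (cases k) auto
  with "2.prems" have "j div 2 < 2^k' - 1" by auto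
  then have "card (heap_ancestors (j div 2)) \<le> k'" by (rule "2.IH")
  then show ?case using k by (simp add: card_insert_if finite_heap_ancestors)
qed

lemma heap_map_diff_input:
  assumes x: "x \<in> cube n" and y: "y \<in> cube n"
  shows "i < n \<Longrightarrow> x i \<noteq> y i \<Longrightarrow>
    \<exists>j<n. heap_map n x j \<noteq> heap_map n y j \<and> i \<in> heap_ancestors j"
proof (induction "n - i" arbitrary: i rule: less_induct)
  case less
  show ?case
  proof (cases "heap_map n x i = heap_map n y i")
    case True
    then obtain c where c: "c = 2*i+1 \<or> c = 2*i+2" "x c \<noteq> y c"
      using heap_map_eq[OF x, of i] heap_map_eq[OF y, of i] less.prems by auto
    then have "c < n" using cube_less x y by (metis (full_types))
    moreover have "n - c < n - i" using c(1) \<open>c < n\<close> by auto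
    ultimately obtain j where "j < n" "heap_map n x j \<noteq> heap_map n y j" "c \<in> heap_ancestors j"
      using less.hyps c(2) by blast
    then show ?thesis using parent_in_heap_ancestors c(1) by blast
  qed (use less.prems self_in_heap_ancestors in blast)
qed

lemma hamming_le_heap_map:
  assumes "x \<in> cube n" "y \<in> cube n" and "n < 2^K"
  shows "hamming n x y \<le> K * hamming n (heap_map n x) (heap_map n y)"
  unfolding hamming_def
proof (rule card_le_mult_card_if_covered)
  show "{i. i < n \<and> x i \<noteq> y i}
      \<subseteq> (\<Union>j\<in>{j. j < n \<and> heap_map n x j \<noteq> heap_map n y j}. heap_ancestors j)"
    using heap_map_diff_input[OF assms(1,2)] by blast
qed (use assms(3) in \<open>auto intro: card_heap_ancestors_le finite_heap_ancestors\<close>)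

lemma bij_betw_heap_map: "bij_betw (heap_map n) (cube n) (cube n)"
proof -
  have "inj_on (heap_map n) (cube n)"
  proof (rule inj_onI)
    fix x y assume x: "x \<in> cube n" and y: "y \<in> cube n" and eq: "heap_map n x = heap_map n y"
    show "x = y"
    proof
      fix i show "x i = y i"
      proof (rule ccontr)
        assume "x i \<noteq> y i"
        moreover from this have "i < n" using cube_less[OF x, of i] cube_less[OF y, of i] by auto
        ultimately show False using heap_map_diff_input[OF x y] eq by simp
      qed
    qed
  qed
  then show ?thesis
    using endo_inj_surj[OF finite_cube heap_map_into_cube] by (simp add: bij_betw_def)
qed

lemma ex_two_power_gt_le_twice_log:
  assumes "2 \<le> n"
  obtains K where "n < 2^K" "real K \<le> 2 * log 2 (real n)"
proof -
  obtain k where k: "2^k \<le> n" "n < 2^(k+1)"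
    using ex_power_ivl1[of 2 n] assms by auto
  have "1 \<le> k" using k(2) assms by (cases k) simp_all
  moreover have "real k \<le> log 2 (real n)"
  proof (rule le_log_of_power)
    show "2 ^ k \<le> real n" using k(1) by (metis of_nat_le_iff of_nat_numeral of_nat_power)
  qed simp
  ultimately have "real (k+1) \<le> 2 * log 2 (real n)" by simp
  with k(2) show ?thesis using that by blast
qed

lemma lipschitz_cube_heap_map: "lipschitz_cube n 2 (heap_map n)"
  unfolding lipschitz_cube_def
proof (intro ballI)
  fix x y assume "x \<in> cube n" "y \<in> cube n"
  from hamming_heap_map_le[OF this]
  show "real (hamming n (heap_map n x) (heap_map n y)) \<le> 2 * real (hamming n x y)"
    by linarith
qed

lemma lipschitz_cube_inv_heap_map:
  assumes "n < 2^K"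
  shows "lipschitz_cube n K (the_inv_into (cube n) (heap_map n))"
proof (rule lipschitz_cube_the_inv_into[OF bij_betw_heap_map])
  fix x y assume "x \<in> cube n" "y \<in> cube n"
  with assms show "real (hamming n x y) \<le> real K * real (hamming n (heap_map n x) (heap_map n y))"
    using hamming_le_heap_map by (simp flip: of_nat_mult)
qed

theorem theorem2:
  shows "\<exists>C::real. \<forall>n::nat. n \<ge> 2 \<longrightarrow>
    (\<exists>A :: nat \<Rightarrow> nat \<Rightarrow> bool.
       is_mapping n Dictator (XOR n) (matvec n A) \<and>
       output_depends_on_at_most n 3 (matvec n A) \<and>
       lipschitz_cube n 2 (matvec n A) \<and>
       lipschitz_cube n (C * ln (real n)) (the_inv_into (cube n) (matvec n A)))"
proof (intro exI[of _ "2 / ln 2"] allI impI exI[of _ heap_matrix] conjI)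
  fix n :: nat assume "2 \<le> n"
  then obtain K where K: "n < 2^K" "real K \<le> 2 / ln 2 * ln (real n)"
    using ex_two_power_gt_le_twice_log by (auto simp: log_def)
  show "is_mapping n Dictator (XOR n) (heap_map n)"
    unfolding is_mapping_def using bij_betw_heap_map XOR_heap_map by simp
  show "output_depends_on_at_most n 3 (heap_map n)"
    by (rule heap_map_depends_on_at_most_3)
  show "lipschitz_cube n 2 (heap_map n)"
    by (rule lipschitz_cube_heap_map)
  show "lipschitz_cube n (2 / ln 2 * ln (real n)) (the_inv_into (cube n) (heap_map n))"
    using lipschitz_cube_inv_heap_map[OF K(1)] K(2) by (rule lipschitz_cube_mono)
qed

end
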